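(* In every $\mathcal L$-model: (1) for every program $A\in\mathcal L_a$, $\to_A=\bigcup_{B\in\mathcal L(A)}\to_B$; (2) for any two interchangeable words $A,B\in(\mathrm{AtP}_\Omega\cup\mathcal L_s)^*$, $\to_A=\to_B$.
   Context: $\tau$PDL syntax: formulas $\mathcal L_s$: $\varphi::=p\mid\neg\varphi\mid\forall A.\varphi\mid\mathsf C_\imath A$; programs $\mathcal L_a$: $A::=a\mid\varphi\mid\varphi\Rightarrow\varphi\mid AA\mid A+A\mid A^*$ ($a\in\mathrm{AtP}$, atomic programs), interpreted in $\mathcal L$-models by the standard relational semantics of $\tau$PDL: $\to_\varphi=\{(w,w):w\models\varphi\}$, $\to_{AB}=\to_A\circ\to_B$, $\to_{A+B}=\to_A\cup\to_B$, $\to_{A^*}=\bigcup_{n\ge0}(\to_A)^n$, $\to_{\varphi\Rightarrow\psi}=\bigcup\{\to_C: C\in\Sigma^+,\ \forall w\models\varphi\,\forall w'(w\to_Cw'\Rightarrow w'\models\psi)\}$ with $\Sigma^+$ the finite nonempty compositions of atomic programs, tests and $\Rightarrow$-terms. $\Omega:=\mathsf{tt}\Rightarrow\mathsf{tt}$ ($\mathsf{tt}$ a tautology), $\mathrm{AtP}_\Omega=\mathrm{AtP}\cup\{\Omega\}$. The language $\mathcal L(A)$ of a program (a set of words over the alphabet $\mathrm{AtP}_\Omega\cup\mathcal L_s$) is defined by $\mathcal L(a)=\{a\}$, $\mathcal L(\varphi)=\{\varphi\}$, $\mathcal L(\Omega)=\{\Omega\}$, $\mathcal L(\varphi\Rightarrow\psi)=\mathcal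 L((\neg\varphi)\Omega+\Omega\psi)$, $\mathcal L(A+B)=\mathcal L(A)\cup\mathcal L(B)$, $\mathcal L(AB)=\mathcal L(A)\mathcal L(B)$, $\mathcal L(A^* )=\mathcal L(A)^*$ (usual concatenation and Kleene star, $\varepsilon$ the empty word). A word $A_1\cdots A_n$ denotes the composed relation $\to_{A_1}\circ\cdots\circ\to_{A_n}$, the empty word denoting the identity. Two nonempty words $A=A_1\cdots A_k$ and $B=B_1\cdots B_n$, each written as blocks that are either single letters of $\mathrm{AtP}_\Omega$ or maximal consecutive runs of formulas, are interchangeable iff $A=B$, or $k=n$ and for each $i$: if $A_i\in\mathrm{AtP}_\Omega$ then $B_i=A_i$, and if $A_i=\varphi_1\cdots\varphi_r$ is a run of formulas then $B_i=\psi_1\cdots\psi_l$ is a run of formulas with $\bigwedge_j\psi_j$ semantically equivalent to $\bigwedge_j\varphi_j$. *)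

theory Defs
  imports Main
begin

datatype ('p, 'a, 'ag) form =
    Prop 'p
  | Neg "('p, 'a, 'ag) form"
  | Box "('p, 'a, 'ag) prog" "('p, 'a, 'ag) form"
  | Cap 'ag "('p, 'a, 'ag) prog"
and ('p, 'a, 'ag) prog =
    Atm 'a
  | Test "('p, 'a, 'ag) form"
  | Imp "('p, 'a, 'ag) form" "('p, 'a, 'ag) form"
  | Seq "('p, 'a, 'ag) prog" "('p, 'a, 'ag) prog"
  | Choice "('p, 'a, 'ag) prog" "('p, 'a, 'ag) prog"
  | Star "('p, 'a, 'ag) prog"

inductive_set sigma_plus :: "('p, 'a, 'ag) prog set" where
  "Atm a \<in> sigma_plus"
| "Test \<phi> \<in> sigma_plus"
| "Imp \<phi> \<psi> \<in> sigma_plus"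
| "C \<in> sigma_plus \<Longrightarrow> D \<in> sigma_plus \<Longrightarrow> Seq C D \<in> sigma_plus"

definition test_rel :: "'w set \<Rightarrow> 'w rel" where
  "test_rel S = {(w, w) | w. w \<in> S}"

text \<open>An L-model is given by atomic relations R, a valuation V and an interpretation CV
  of the C-modality. The pair (T, P) (truth sets of formulas, relations of programs)
  is a semantics of the model iff it satisfies all semantic clauses of tauPDL
  (the clause for => is impredicative, so it is stated as an equation).\<close>
definition is_sem ::
  "('a \<Rightarrow> 'w rel) \<Rightarrow> ('p \<Rightarrow> 'w set) \<Rightarrow> ('ag \<Rightarrow> ('p, 'a, 'ag) prog \<Rightarrow> 'w set)
   \<Rightarrow> (('p, 'a, 'ag) form \<Rightarrow> 'w set) \<Rightarrow> (('p, 'a, 'ag) prog \<Rightarrow> 'w rel) \<Rightarrow> bool" where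
  "is_sem R V CV T P \<longleftrightarrow>
     (\<forall>p. T (Prop p) = V p) \<and>
     (\<forall>\<phi>. T (Neg \<phi>) = - T \<phi>) \<and>
     (\<forall>A \<phi>. T (Box A \<phi>) = {w. \<forall>w'. (w, w') \<in> P A \<longrightarrow> w' \<in> T \<phi>}) \<and>
     (\<forall>i A. T (Cap i A) = CV i A) \<and>
     (\<forall>a. P (Atm a) = R a) \<and>
     (\<forall>\<phi>. P (Test \<phi>) = test_rel (T \<phi>)) \<and>
     (\<forall>A B. P (Seq A B) = P A O P B) \<and>
     (\<forall>A B. P (Choice A B) = P A \<union> P B) \<and>
     (\<forall>A. P (Star A) = (P A)\<^sup>*) \<and>
     (\<forall>\<phi> \<psi>. P (Imp \<phi> \<psi>) =
        \<Union>{P C | C. C \<in> sigma_plus \<and>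
                    (\<forall>w \<in> T \<phi>. \<forall>w'. (w, w') \<in> P C \<longrightarrow> w' \<in> T \<psi>)})"

datatype ('p, 'a, 'ag) letter =
    LAt 'a
  | LOmega
  | LForm "('p, 'a, 'ag) form"

definition conc :: "'x list set \<Rightarrow> 'x list set \<Rightarrow> 'x list set" where
  "conc X Y = {x @ y | x y. x \<in> X \<and> y \<in> Y}"

definition kstar :: "'x list set \<Rightarrow> 'x list set" where
  "kstar X = (\<Union>n. ((conc X) ^^ n) {[]})"

text \<open>tt is a fixed tautology; Omega = tt => tt.\<close>
fun lang :: "('p, 'a, 'ag) form \<Rightarrow> ('p, 'a, 'ag) prog \<Rightarrow> ('p, 'a, 'ag) letter list set" where
  "lang tt (Atm a) = {[LAt a]}"
| "lang tt (Test \<phi>) = {[LForm \<phi>]}"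
| "lang tt (Imp \<phi> \<psi>) =
     (if \<phi> = tt \<and> \<psi> = tt then {[LOmega]}
      else {[LForm (Neg \<phi>), LOmega], [LOmega, LForm \<psi>]})"
| "lang tt (Choice A B) = lang tt A \<union> lang tt B"
| "lang tt (Seq A B) = conc (lang tt A) (lang tt B)"
| "lang tt (Star A) = kstar (lang tt A)"

fun letter_rel :: "('p, 'a, 'ag) form \<Rightarrow> (('p, 'a, 'ag) form \<Rightarrow> 'w set)
     \<Rightarrow> (('p, 'a, 'ag) prog \<Rightarrow> 'w rel) \<Rightarrow> ('p, 'a, 'ag) letter \<Rightarrow> 'w rel" where
  "letter_rel tt T P (LAt a) = P (Atm a)"
| "letter_rel tt T P LOmega = P (Imp tt tt)"
| "letter_rel tt T P (LForm \<phi>) = test_rel (T \<phi>)"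

fun word_rel :: "('p, 'a, 'ag) form \<Rightarrow> (('p, 'a, 'ag) form \<Rightarrow> 'w set)
     \<Rightarrow> (('p, 'a, 'ag) prog \<Rightarrow> 'w rel) \<Rightarrow> ('p, 'a, 'ag) letter list \<Rightarrow> 'w rel" where
  "word_rel tt T P [] = Id"
| "word_rel tt T P (x # xs) = letter_rel tt T P x O word_rel tt T P xs"

datatype ('p, 'a, 'ag) block =
    BLetter "('p, 'a, 'ag) letter"
  | BRun "('p, 'a, 'ag) form list"

fun blocks :: "('p, 'a, 'ag) letter list \<Rightarrow> ('p, 'a, 'ag) block list" where
  "blocks [] = []"
| "blocks (LForm \<phi> # xs) =
     (case blocks xs of
        BRun fs # bs \<Rightarrow> BRun (\<phi> # fs) # bs
      | bs \<Rightarrow> BRun [\<phi>] # bs)"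
| "blocks (x # xs) = BLetter x # blocks xs"

fun block_match :: "(('p, 'a, 'ag) form \<Rightarrow> 'w set)
     \<Rightarrow> ('p, 'a, 'ag) block \<Rightarrow> ('p, 'a, 'ag) block \<Rightarrow> bool" where
  "block_match T (BLetter x) (BLetter y) = (x = y)"
| "block_match T (BRun fs) (BRun gs) = (\<Inter>(T ` set fs) = \<Inter>(T ` set gs))"
| "block_match T _ _ = False"

definition interchangeable :: "(('p, 'a, 'ag) form \<Rightarrow> 'w set)
     \<Rightarrow> ('p, 'a, 'ag) letter list \<Rightarrow> ('p, 'a, 'ag) letter list \<Rightarrow> bool" where
  "interchangeable T A B \<longleftrightarrow>
     A = B \<or> (A \<noteq> [] \<and> B \<noteq> [] \<and> list_all2 (block_match T) (blocks A) (blocks B))"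

end

theory Submission
  imports Defs
begin

text \<open>Every clause of the semantics commutes with taking unions over languages: sequencing,
  choice and star are the relational counterparts of concatenation, union and Kleene star.
  The only nonregular clause is that of \<open>\<phi> \<Rightarrow> \<psi>\<close>, which is reduced to \<open>\<Omega>\<close>: a
  \<open>\<Sigma>\<^sup>+\<close>-step either starts outside \<open>\<phi>\<close> or, if it is \<open>\<phi>\<close>-to-\<open>\<psi>\<close>-correct, ends in \<open>\<psi>\<close>;
  conversely prefixing the test \<open>\<not>\<phi>\<close> or suffixing the test \<open>\<psi>\<close> makes any \<open>\<Sigma>\<^sup>+\<close>-program
  correct. For interchangeable words, a maximal run of tests denotes the test of the
  conjunction of its formulas, so the relation of a word only depends on its blocks.\<close>

lemma word_rel_append:
  "word_rel tt T P (xs @ ys) = word_rel tt T P xs O word_rel tt T P ys"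
  by (induction xs) (auto simp: O_assoc)

lemma UN_word_rel_conc:
  "(\<Union>w \<in> conc X Y. word_rel tt T P w) =
   (\<Union>w \<in> X. word_rel tt T P w) O (\<Union>w \<in> Y. word_rel tt T P w)"
proof -
  have "(\<Union>w \<in> conc X Y. word_rel tt T P w) = (\<Union>x \<in> X. \<Union>y \<in> Y. word_rel tt T P (x @ y))"
    unfolding conc_def by blast
  then show ?thesis
    by (simp add: word_rel_append relcomp_UNION_distrib relcomp_UNION_distrib2)
      blast
qed

lemma UN_word_rel_conc_pow:
  "(\<Union>w \<in> (conc X ^^ n) {[]}. word_rel tt T P w) = (\<Union>w \<in> X. word_rel tt T P w) ^^ n"
  by (induction n) (simp_all add: UN_word_rel_conc relpow_commute)

lemma UN_word_rel_kstar:
  "(\<Union>w \<in> kstar X. word_rel tt T P w) = (\<Union>w \<in> X. word_rel tt T P w)\<^sup>*"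
proof -
  have "(\<Union>w \<in> kstar X. word_rel tt T P w) = (\<Union>n. \<Union>w \<in> (conc X ^^ n) {[]}. word_rel tt T P w)"
    unfolding kstar_def by blast
  then show ?thesis
    by (simp add: UN_word_rel_conc_pow rtrancl_is_UN_relpow)
qed

lemma Omega_rel:
  assumes "is_sem R V CV T P" and "T tt = UNIV"
  shows "P (Imp tt tt) = \<Union>{P C | C. C \<in> sigma_plus}"
  using assms unfolding is_sem_def by simp

lemma Imp_rel_subset:
  assumes sem: "is_sem R V CV T P" and taut: "T tt = UNIV"
  shows "P (Imp \<phi> \<psi>) \<subseteq> test_rel (T (Neg \<phi>)) O P (Imp tt tt) \<union> P (Imp tt tt) O test_rel (T \<psi>)"
proof
  have Imp: "P (Imp \<phi> \<psi>) = \<Union>{P C | C. C \<in> sigma_plus \<and>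
                (\<forall>w \<in> T \<phi>. \<forall>w'. (w, w') \<in> P C \<longrightarrow> w' \<in> T \<psi>)}"
    and Neg: "T (Neg \<phi>) = - T \<phi>"
    using sem unfolding is_sem_def by simp_all
  fix x assume "x \<in> P (Imp \<phi> \<psi>)"
  then obtain w w' C where x: "x = (w, w')" and C: "C \<in> sigma_plus" and step: "(w, w') \<in> P C"
    and correct: "\<forall>v \<in> T \<phi>. \<forall>v'. (v, v') \<in> P C \<longrightarrow> v' \<in> T \<psi>"
    unfolding Imp by (cases x) auto
  have Omega: "(w, w') \<in> P (Imp tt tt)"
    using Omega_rel[OF sem taut] C step by blast
  have "w \<notin> T \<phi> \<or> w' \<in> T \<psi>"
    using correct step by blast
  then show "x \<in> test_rel (T (Neg \<phi>)) O P (Imp tt tt) \<union> P (Imp tt tt) O test_rel (T \<psi>)"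
    using x Omega Neg unfolding test_rel_def by blast
qed

lemma Imp_rel_supset:
  assumes sem: "is_sem R V CV T P" and taut: "T tt = UNIV"
  shows "test_rel (T (Neg \<phi>)) O P (Imp tt tt) \<union> P (Imp tt tt) O test_rel (T \<psi>) \<subseteq> P (Imp \<phi> \<psi>)"
proof -
  have Imp: "P (Imp \<phi> \<psi>) = \<Union>{P C | C. C \<in> sigma_plus \<and>
                (\<forall>w \<in> T \<phi>. \<forall>w'. (w, w') \<in> P C \<longrightarrow> w' \<in> T \<psi>)}"
    and Seq: "\<And>A B. P (Seq A B) = P A O P B"
    and Test: "\<And>\<chi>. P (Test \<chi>) = test_rel (T \<chi>)"
    and Neg: "T (Neg \<phi>) = - T \<phi>"
    using sem unfolding is_sem_def by simp_all
  have guard: "P (Seq (Test (Neg \<phi>)) C) \<subseteq> P (Imp \<phi> \<psi>)" "P (Seq C (Test \<psi>)) \<subseteq> P (Imp \<phi> \<psi>)"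
    if "C \<in> sigma_plus" for C
  proof -
    have "Seq (Test (Neg \<phi>)) C \<in> sigma_plus" "Seq C (Test \<psi>) \<in> sigma_plus"
      using that by (auto intro: sigma_plus.intros)
    moreover have "\<forall>w \<in> T \<phi>. \<forall>w'. (w, w') \<in> P (Seq (Test (Neg \<phi>)) C) \<longrightarrow> w' \<in> T \<psi>"
      "\<forall>w \<in> T \<phi>. \<forall>w'. (w, w') \<in> P (Seq C (Test \<psi>)) \<longrightarrow> w' \<in> T \<psi>"
      by (auto simp: Seq Test Neg test_rel_def)
    ultimately show "P (Seq (Test (Neg \<phi>)) C) \<subseteq> P (Imp \<phi> \<psi>)" "P (Seq C (Test \<psi>)) \<subseteq> P (Imp \<phi> \<psi>)"
      unfolding Imp by blast+
  qed
  show ?thesis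
    unfolding Omega_rel[OF sem taut] relcomp_UNION_distrib relcomp_UNION_distrib2
    using guard by (simp add: Seq Test) blast
qed

lemma Imp_rel:
  assumes "is_sem R V CV T P" and "T tt = UNIV"
  shows "P (Imp \<phi> \<psi>) = test_rel (T (Neg \<phi>)) O P (Imp tt tt) \<union> P (Imp tt tt) O test_rel (T \<psi>)"
  using Imp_rel_subset[OF assms] Imp_rel_supset[OF assms] by (rule antisym)

theorem prog_rel_eq_UN_lang:
  assumes sem: "is_sem R V CV T P" and taut: "T tt = UNIV"
  shows "P A = (\<Union>w \<in> lang tt A. word_rel tt T P w)"
proof -
  have clauses: "\<And>\<phi>. P (Test \<phi>) = test_rel (T \<phi>)" "\<And>A B. P (Seq A B) = P A O P B"
    "\<And>A B. P (Choice A B) = P A \<union> P B" "\<And>A. P (Star A) = (P A)\<^sup>*"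
    using sem unfolding is_sem_def by simp_all
  show ?thesis
  proof (induction A rule: prog.induct[where ?P1.0 = "\<lambda>_. True"])
    case (Imp \<phi> \<psi>)
    then show ?case
      using Imp_rel[OF sem taut, of \<phi> \<psi>] by auto
  qed (simp_all add: clauses UN_word_rel_conc UN_word_rel_kstar)
qed

fun block_rel :: "('p, 'a, 'ag) form \<Rightarrow> (('p, 'a, 'ag) form \<Rightarrow> 'w set)
     \<Rightarrow> (('p, 'a, 'ag) prog \<Rightarrow> 'w rel) \<Rightarrow> ('p, 'a, 'ag) block \<Rightarrow> 'w rel" where
  "block_rel tt T P (BLetter x) = letter_rel tt T P x"
| "block_rel tt T P (BRun fs) = test_rel (\<Inter>(T ` set fs))"

definition blocks_rel :: "('p, 'a, 'ag) form \<Rightarrow> (('p, 'a, 'ag) form \<Rightarrow> 'w set)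
     \<Rightarrow> (('p, 'a, 'ag) prog \<Rightarrow> 'w rel) \<Rightarrow> ('p, 'a, 'ag) block list \<Rightarrow> 'w rel" where
  "blocks_rel tt T P bs = foldr (\<lambda>b r. block_rel tt T P b O r) bs Id"

lemma word_rel_eq_blocks_rel: "word_rel tt T P xs = blocks_rel tt T P (blocks xs)"
proof (induction xs rule: blocks.induct)
  case (2 \<phi> xs)
  then show ?case
    by (cases "blocks xs" rule: list.exhaust; cases "hd (blocks xs)")
      (auto simp: blocks_rel_def test_rel_def)
qed (simp_all add: blocks_rel_def)

lemma block_match_block_rel:
  "block_match T b c \<Longrightarrow> block_rel tt T P b = block_rel tt T P c"
  by (cases b; cases c) auto

lemma blocks_rel_eq_if_block_match:
  "list_all2 (block_match T) bs cs \<Longrightarrow> blocks_rel tt T P bs = blocks_rel tt T P cs"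
  by (induction bs cs rule: list_all2_induct)
    (simp_all add: blocks_rel_def block_match_block_rel[where tt = tt and P = P])

theorem interchangeable_word_rel_eq:
  "interchangeable T xs ys \<Longrightarrow> word_rel tt T P xs = word_rel tt T P ys"
  unfolding interchangeable_def word_rel_eq_blocks_rel
  using blocks_rel_eq_if_block_match by blast

theorem mainTheorem9:
  fixes R :: "'a \<Rightarrow> 'w rel" and V :: "'p \<Rightarrow> 'w set"
    and CV :: "'ag \<Rightarrow> ('p, 'a, 'ag) prog \<Rightarrow> 'w set"
    and T :: "('p, 'a, 'ag) form \<Rightarrow> 'w set" and P :: "('p, 'a, 'ag) prog \<Rightarrow> 'w rel"
    and tt :: "('p, 'a, 'ag) form"
  assumes sem: "is_sem R V CV T P"
    and taut: "T tt = UNIV"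
  shows "(\<forall>A. P A = (\<Union>B \<in> lang tt A. word_rel tt T P B))
       \<and> (\<forall>A B. interchangeable T A B \<longrightarrow> word_rel tt T P A = word_rel tt T P B)"
  using prog_rel_eq_UN_lang[OF sem taut] interchangeable_word_rel_eq[where tt = tt and P = P]
  by simp

end
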